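(* Let $\phi:\mathfrak V\to\mathfrak W$ be a $*$-linear map of super operator spaces, and let $\mathcal T\subseteq\mathfrak V$ be a closed subspace with $\mathcal T+\mathcal T^*=\mathfrak V$. Suppose there exist isometric $*$-representations of $\mathfrak V$ and $\mathfrak W$ on $\mathbb Z_2$-graded Hilbert spaces such that the restriction of $\phi$ to $\mathcal T$ is really strongly contractive. Then $\phi$ is strongly contractive (and hence hermitian contractive).
   Context: A $\mathbb Z_2$-graded Hilbert space $\widehat{\mathcal H}$ carries a grading operator $\epsilon$ (a selfadjoint unitary); the superinvolution on $\mathcal B(\widehat{\mathcal H})$ is $x^*=\epsilon\,x^\dagger\,\epsilon$, $x^\dagger$ the ordinary adjoint. A super operator space is an operator space $\mathfrak V$ with an antilinear involution $*$ such that $[x_{ij}]\mapsto[x_{ji}^*]$ is isometric on each $M_n(\mathfrak V)$. An isometric $*$-representation of $\mathfrak V$ is an isometric linear map $\rho:\mathfrak V\to\mathcal B(\widehat{\mathcal H})$ with $\rho(v^* )=\rho(v)^*$ (superinvolution). With respect to such representations, the strong norm of $x$ is $\Vert x\Vert^s=\sup\{|\langle x\xi,\epsilon\xi\rangle| : \xi\in\widehat{\mathcal H},\ \Vert\xi\Vert\le1\}$ (with $x$ identified with its image). A linear map $\phi$ is strongly contractive if $\Vert\phi(x)\Vert^s\le\Vert x\Vert^s$ for all $x$. The restriction of $\phi$ to $\mathcal T$ is really strongly contractive if for every unit vector $\eta$ in the representation space of $\mathfrak W$ and every $x\in\mathcal T$ there is a unit vector $\xi$ in the representation space of $\mathfrak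 V$ such that, with $a=\langle x\xi,\epsilon\xi\rangle$ and $b=\langle\phi(x)\eta,\epsilon\eta\rangle$, one has $|a|\ge|b|$ and $|\mathrm{Re}(a)|\ge|\mathrm{Re}(b)|$. The map $\phi$ is hermitian contractive if $\Vert\phi(x)\Vert\le\Vert x\Vert$ for every $x\in\mathfrak V$ with $x=x^*$. *)

theory Defs
  imports "HOL-Analysis.Analysis"
begin

class scvector = real_vector +
  fixes scaleC :: "complex \<Rightarrow> 'a \<Rightarrow> 'a" (infixr \<open>*\<^sub>C\<close> 75)
  assumes scaleC_add_right: "a *\<^sub>C (x + y) = a *\<^sub>C x + a *\<^sub>C y"
    and scaleC_add_left: "(a + b) *\<^sub>C x = a *\<^sub>C x + b *\<^sub>C x"
    and scaleC_scaleC: "a *\<^sub>C (b *\<^sub>C x) = (a * b) *\<^sub>C x"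
    and scaleC_one: "1 *\<^sub>C x = x"
    and scaleR_scaleC: "scaleR r x = complex_of_real r *\<^sub>C x"

class scnormed_vector = scvector + real_normed_vector +
  assumes norm_scaleC: "norm (a *\<^sub>C x) = cmod a * norm x"

class scinner = scnormed_vector +
  fixes cinner :: "'a \<Rightarrow> 'a \<Rightarrow> complex"
  assumes cinner_commute: "cinner x y = cnj (cinner y x)"
    and cinner_add_left: "cinner (x + y) z = cinner x z + cinner y z"
    and cinner_scaleC_left: "cinner (a *\<^sub>C x) y = a * cinner x y"
    and norm_eq_sqrt_cinner: "norm x = sqrt (Re (cinner x x))"
    and cinner_self_real: "Im (cinner x x) = 0"

class schilbert = scinner + complete_space

definition clin :: "('a::scvector \<Rightarrow> 'b::scvector) \<Rightarrow> bool" where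
  "clin f \<longleftrightarrow> (\<forall>x y. f (x + y) = f x + f y) \<and> (\<forall>c x. f (c *\<^sub>C x) = c *\<^sub>C f x)"

definition csubsp :: "'a::scvector set \<Rightarrow> bool" where
  "csubsp S \<longleftrightarrow> 0 \<in> S \<and> (\<forall>x\<in>S. \<forall>y\<in>S. x + y \<in> S) \<and> (\<forall>c. \<forall>x\<in>S. c *\<^sub>C x \<in> S)"

definition bounded_op :: "('h::schilbert \<Rightarrow> 'h) \<Rightarrow> bool" where
  "bounded_op A \<longleftrightarrow> clin A \<and> (\<exists>K. \<forall>x. norm (A x) \<le> K * norm x)"

definition op_norm :: "('h::schilbert \<Rightarrow> 'h) \<Rightarrow> real" where
  "op_norm A = Sup {norm (A x) | x. norm x \<le> 1}"

definition cadjoint :: "('h::schilbert \<Rightarrow> 'h) \<Rightarrow> ('h \<Rightarrow> 'h)" where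
  "cadjoint A = (THE B. \<forall>x y. cinner (A x) y = cinner x (B y))"

definition grading :: "('h::schilbert \<Rightarrow> 'h) \<Rightarrow> bool" where
  "grading \<epsilon> \<longleftrightarrow> bounded_op \<epsilon> \<and> (\<forall>x. \<epsilon> (\<epsilon> x) = x) \<and> (\<forall>x y. cinner (\<epsilon> x) y = cinner x (\<epsilon> y))"

definition superadj :: "('h::schilbert \<Rightarrow> 'h) \<Rightarrow> ('h \<Rightarrow> 'h) \<Rightarrow> ('h \<Rightarrow> 'h)" where
  "superadj \<epsilon> A = \<epsilon> \<circ> cadjoint A \<circ> \<epsilon>"

definition strong_norm :: "('h::schilbert \<Rightarrow> 'h) \<Rightarrow> ('h \<Rightarrow> 'h) \<Rightarrow> real" where
  "strong_norm \<epsilon> A = Sup {cmod (cinner (A \<xi>) (\<epsilon> \<xi>)) | \<xi>. norm \<xi> \<le> 1}"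

text \<open>An n x n matrix over V is a function nat => nat => V, only entries with
  indices < n being relevant.  Complex scalar matrices likewise.\<close>

definition cmatnorm :: "nat \<Rightarrow> nat \<Rightarrow> (nat \<Rightarrow> nat \<Rightarrow> complex) \<Rightarrow> real" where
  "cmatnorm m n \<alpha> = Sup {sqrt (\<Sum>i<m. (cmod (\<Sum>j<n. \<alpha> i j * z j))\<^sup>2) | z. (\<Sum>j<n. (cmod (z j))\<^sup>2) \<le> 1}"

definition matmul3 :: "nat \<Rightarrow> (nat \<Rightarrow> nat \<Rightarrow> complex) \<Rightarrow> (nat \<Rightarrow> nat \<Rightarrow> 'v::scvector)
    \<Rightarrow> (nat \<Rightarrow> nat \<Rightarrow> complex) \<Rightarrow> nat \<Rightarrow> nat \<Rightarrow> 'v" where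
  "matmul3 n \<alpha> X \<beta> i j = (\<Sum>k<n. \<Sum>l<n. (\<alpha> i k * \<beta> l j) *\<^sub>C X k l)"

definition dsum :: "nat \<Rightarrow> (nat \<Rightarrow> nat \<Rightarrow> 'v::zero) \<Rightarrow> (nat \<Rightarrow> nat \<Rightarrow> 'v) \<Rightarrow> nat \<Rightarrow> nat \<Rightarrow> 'v" where
  "dsum n X Y i j = (if i < n \<and> j < n then X i j
                     else if n \<le> i \<and> n \<le> j then Y (i - n) (j - n) else 0)"

text \<open>Abstract operator space (Ruan's axioms): a family of matrix norms on
  M_n(V), n \<ge> 1, with M_1(V) = V isometrically.\<close>
definition operator_space :: "(nat \<Rightarrow> (nat \<Rightarrow> nat \<Rightarrow> 'v::scnormed_vector) \<Rightarrow> real) \<Rightarrow> bool" where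
  "operator_space mn \<longleftrightarrow>
     (\<forall>X. mn 1 X = norm (X 0 0)) \<and>
     (\<forall>n X Y. (\<forall>i<n. \<forall>j<n. X i j = Y i j) \<longrightarrow> mn n X = mn n Y) \<and>
     (\<forall>n\<ge>1. \<forall>X. mn n X = 0 \<longleftrightarrow> (\<forall>i<n. \<forall>j<n. X i j = 0)) \<and>
     (\<forall>n\<ge>1. \<forall>X Y. mn n (\<lambda>i j. X i j + Y i j) \<le> mn n X + mn n Y) \<and>
     (\<forall>n\<ge>1. \<forall>c X. mn n (\<lambda>i j. c *\<^sub>C X i j) = cmod c * mn n X) \<and>
     (\<forall>m\<ge>1. \<forall>n\<ge>1. \<forall>\<alpha> X \<beta>.
        mn m (matmul3 n \<alpha> X \<beta>) \<le> cmatnorm m n \<alpha> * mn n X * cmatnorm n m \<beta>) \<and>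
     (\<forall>n\<ge>1. \<forall>m\<ge>1. \<forall>X Y. mn (n + m) (dsum n X Y) = max (mn n X) (mn m Y))"

definition super_operator_space ::
  "(nat \<Rightarrow> (nat \<Rightarrow> nat \<Rightarrow> 'v::scnormed_vector) \<Rightarrow> real) \<Rightarrow> ('v \<Rightarrow> 'v) \<Rightarrow> bool" where
  "super_operator_space mn st \<longleftrightarrow>
     operator_space mn \<and>
     (\<forall>x y. st (x + y) = st x + st y) \<and>
     (\<forall>c x. st (c *\<^sub>C x) = cnj c *\<^sub>C st x) \<and>
     (\<forall>x. st (st x) = x) \<and>
     (\<forall>n\<ge>1. \<forall>X. mn n (\<lambda>i j. st (X j i)) = mn n X)"

definition iso_star_rep ::
  "('v::scnormed_vector \<Rightarrow> 'v) \<Rightarrow> ('h::schilbert \<Rightarrow> 'h) \<Rightarrow> ('v \<Rightarrow> 'h \<Rightarrow> 'h) \<Rightarrow> bool" where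
  "iso_star_rep st \<epsilon> \<rho> \<longleftrightarrow>
     (\<forall>v. bounded_op (\<rho> v)) \<and>
     (\<forall>u v \<xi>. \<rho> (u + v) \<xi> = \<rho> u \<xi> + \<rho> v \<xi>) \<and>
     (\<forall>c v \<xi>. \<rho> (c *\<^sub>C v) \<xi> = c *\<^sub>C \<rho> v \<xi>) \<and>
     (\<forall>v. op_norm (\<rho> v) = norm v) \<and>
     (\<forall>v. \<rho> (st v) = superadj \<epsilon> (\<rho> v))"

definition star_linear :: "('v::scvector \<Rightarrow> 'v) \<Rightarrow> ('w::scvector \<Rightarrow> 'w) \<Rightarrow> ('v \<Rightarrow> 'w) \<Rightarrow> bool" where
  "star_linear stV stW \<phi> \<longleftrightarrow> clin \<phi> \<and> (\<forall>x. \<phi> (stV x) = stW (\<phi> x))"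

definition really_strongly_contractive_on ::
  "'v set \<Rightarrow> ('v \<Rightarrow> 'w) \<Rightarrow> ('h1::schilbert \<Rightarrow> 'h1) \<Rightarrow> ('v \<Rightarrow> 'h1 \<Rightarrow> 'h1)
     \<Rightarrow> ('h2::schilbert \<Rightarrow> 'h2) \<Rightarrow> ('w \<Rightarrow> 'h2 \<Rightarrow> 'h2) \<Rightarrow> bool" where
  "really_strongly_contractive_on T \<phi> \<epsilon>V \<rho>V \<epsilon>W \<rho>W \<longleftrightarrow>
     (\<forall>\<eta>. norm \<eta> = 1 \<longrightarrow> (\<forall>x\<in>T. \<exists>\<xi>. norm \<xi> = 1 \<and>
        (let a = cinner (\<rho>V x \<xi>) (\<epsilon>V \<xi>); b = cinner (\<rho>W (\<phi> x) \<eta>) (\<epsilon>W \<eta>)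
         in cmod a \<ge> cmod b \<and> \<bar>Re a\<bar> \<ge> \<bar>Re b\<bar>)))"

definition strongly_contractive ::
  "('v \<Rightarrow> 'w) \<Rightarrow> ('h1::schilbert \<Rightarrow> 'h1) \<Rightarrow> ('v \<Rightarrow> 'h1 \<Rightarrow> 'h1)
     \<Rightarrow> ('h2::schilbert \<Rightarrow> 'h2) \<Rightarrow> ('w \<Rightarrow> 'h2 \<Rightarrow> 'h2) \<Rightarrow> bool" where
  "strongly_contractive \<phi> \<epsilon>V \<rho>V \<epsilon>W \<rho>W \<longleftrightarrow>
     (\<forall>x. strong_norm \<epsilon>W (\<rho>W (\<phi> x)) \<le> strong_norm \<epsilon>V (\<rho>V x))"

definition hermitian_contractive ::
  "('v::scnormed_vector \<Rightarrow> 'v) \<Rightarrow> ('v \<Rightarrow> 'w::scnormed_vector) \<Rightarrow> bool" where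
  "hermitian_contractive stV \<phi> \<longleftrightarrow> (\<forall>x. stV x = x \<longrightarrow> norm (\<phi> x) \<le> norm x)"

end

theory Submission
  imports Defs
begin

(*
  For a *-representation the form q_xi(x) = <x xi, eps xi> satisfies q_xi(x* ) = cnj (q_xi(x)),
  hence Re q_xi(t + s* ) = Re q_xi(t + s).  Given x and a unit vector eta, rotate x by a
  unimodular omega so that q_eta(phi(omega x)) = |q_eta(phi x)|, and write omega x = t + s*
  with t, s in T.  Real strong contractivity at t + s in T yields a unit vector xi with
    |q_eta(phi x)| = Re q_eta(phi(t + s)) <= |Re q_xi(t + s)| = |Re q_xi(omega x)| <= ||x||^s.
  For selfadjoint x the operator eps x is selfadjoint in the ordinary sense and ||x||^s is its
  numerical radius, which equals its norm; this gives hermitian contractivity.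
  The superinvolution is defined through the adjoint as a definite description, so adjoints
  have to be shown to exist: by the Riesz representation theorem, proved via nearest points
  of closed convex sets.
*)

lemma scaleC_zero_left [simp]: "(0::complex) *\<^sub>C x = 0"
  using scaleR_scaleC[of 0 x] by simp

lemma cinner_zero_left [simp]: "cinner 0 y = 0"
  using cinner_add_left[of 0 0 y] by simp

lemma cinner_zero_right [simp]: "cinner x 0 = 0"
  by (subst cinner_commute) simp

lemma cinner_add_right: "cinner x (y + z) = cinner x y + cinner x z"
  by (metis cinner_commute cinner_add_left complex_cnj_add)

lemma cinner_scaleC_right: "cinner x (a *\<^sub>C y) = cnj a * cinner x y"
  by (metis cinner_commute cinner_scaleC_left complex_cnj_mult)

lemma cinner_scaleR_right: "cinner x (r *\<^sub>R y) = of_real r * cinner x y"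
  by (simp add: scaleR_scaleC cinner_scaleC_right)

lemma cinner_diff_left: "cinner (x - y) z = cinner x z - cinner y z"
  using cinner_add_left[of "x - y" y z] by (simp add: eq_diff_eq)

lemma cinner_diff_right: "cinner x (y - z) = cinner x y - cinner x z"
  using cinner_add_right[of x "y - z" z] by (simp add: eq_diff_eq)

lemma power2_norm_eq_cinner: "(norm x)\<^sup>2 = Re (cinner x x)"
  by (metis norm_eq_sqrt_cinner norm_ge_zero real_sqrt_ge_0_iff real_sqrt_pow2)

lemma cinner_self_eq: "cinner x x = of_real ((norm x)\<^sup>2)"
  by (simp add: power2_norm_eq_cinner complex_eq_iff cinner_self_real)

lemma cinner_ext:
  assumes "\<And>x. cinner x u = cinner x v"
  shows "u = v"
proof -
  have "cinner (u - v) (u - v) = 0"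
    using assms[of "u - v"] by (simp add: cinner_diff_right)
  then show ?thesis by (simp add: cinner_self_eq)
qed

lemma power2_norm_diff: "(norm (x - y))\<^sup>2 = (norm x)\<^sup>2 - 2 * Re (cinner x y) + (norm y)\<^sup>2"
proof -
  have "(norm (x - y))\<^sup>2 = Re (cinner x x - (cinner x y + cnj (cinner x y)) + cinner y y)"
    unfolding power2_norm_eq_cinner
    by (simp add: cinner_diff_left cinner_diff_right cinner_commute[of y x] algebra_simps)
  then show ?thesis by (simp add: power2_norm_eq_cinner)
qed

lemma parallelogram_law:
  fixes x y :: "'a::scinner"
  shows "(norm (x + y))\<^sup>2 + (norm (x - y))\<^sup>2 = 2 * (norm x)\<^sup>2 + 2 * (norm y)\<^sup>2"
  using power2_norm_diff[of x "- y"] power2_norm_diff[of x y]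
  by (simp add: cinner_diff_right[of x 0, simplified])

lemma power2_norm_diff_projection:
  assumes "y \<noteq> 0"
  shows "(norm (x - (cinner x y / of_real ((norm y)\<^sup>2)) *\<^sub>C y))\<^sup>2
    = (norm x)\<^sup>2 - (cmod (cinner x y))\<^sup>2 / (norm y)\<^sup>2"
proof -
  define c where "c = cinner x y"
  define n where "n = (norm y)\<^sup>2"
  have n: "n > 0" using assms by (simp add: n_def)
  have "cnj (c / of_real n) * c = of_real ((cmod c)\<^sup>2 / n)"
    by (simp add: complex_norm_square[symmetric] mult.commute)
  then have "Re (cinner x ((c / of_real n) *\<^sub>C y)) = (cmod c)\<^sup>2 / n"
    unfolding cinner_scaleC_right c_def by (metis Re_complex_of_real)
  moreover have "(norm ((c / of_real n) *\<^sub>C y))\<^sup>2 = (cmod c)\<^sup>2 / n"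
  proof -
    have "(norm ((c / of_real n) *\<^sub>C y))\<^sup>2 = ((cmod c)\<^sup>2 / n\<^sup>2) * n"
      using n by (simp add: norm_scaleC norm_divide power_divide power_mult_distrib
          flip: n_def)
    then show ?thesis using n by (simp add: power2_eq_square)
  qed
  ultimately show ?thesis
    by (simp add: power2_norm_diff c_def n_def)
qed

lemma Cauchy_Schwarz_cinner: "cmod (cinner x y) \<le> norm x * norm y"
proof (cases "y = 0")
  case True
  then show ?thesis by simp
next
  case False
  then have "(cmod (cinner x y))\<^sup>2 / (norm y)\<^sup>2 \<le> (norm x)\<^sup>2"
    using power2_norm_diff_projection[of y x] zero_le_power2 by (metis diff_ge_0_iff_ge)
  with False have "(cmod (cinner x y))\<^sup>2 \<le> (norm x * norm y)\<^sup>2"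
    by (simp add: divide_le_eq power_mult_distrib)
  then show ?thesis
    by (meson mult_nonneg_nonneg norm_ge_zero power2_le_imp_le)
qed

lemma power2_norm_diff_le_excess:
  fixes z a b :: "'a::scinner"
  assumes "convex K" "a \<in> K" "b \<in> K" and d: "\<And>k. k \<in> K \<Longrightarrow> d \<le> (norm (z - k))\<^sup>2"
  shows "(norm (a - b))\<^sup>2 \<le> 2 * (norm (z - a))\<^sup>2 + 2 * (norm (z - b))\<^sup>2 - 4 * d"
proof -
  have "(1/2) *\<^sub>R a + (1/2) *\<^sub>R b \<in> K"
    using assms(1-3) by (rule convexD) auto
  then have "4 * d \<le> 4 * (norm (z - ((1/2) *\<^sub>R a + (1/2) *\<^sub>R b)))\<^sup>2"
    using d by simp
  also have "\<dots> = (norm ((z - a) + (z - b)))\<^sup>2"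
  proof -
    have "(z - a) + (z - b) = 2 *\<^sub>R (z - ((1/2) *\<^sub>R a + (1/2) *\<^sub>R b))"
      by (simp add: algebra_simps scaleR_2)
    then show ?thesis by (simp add: power_mult_distrib)
  qed
  finally show ?thesis
    using parallelogram_law[of "z - a" "z - b"] by (simp add: norm_minus_commute)
qed

lemma minimizing_sequence_Cauchy:
  fixes z :: "'a::scinner"
  assumes "convex K" "\<And>n. ks n \<in> K" and d: "\<And>k. k \<in> K \<Longrightarrow> d \<le> (norm (z - k))\<^sup>2"
    and close: "\<And>n. (norm (z - ks n))\<^sup>2 < d + inverse (real (Suc n))"
  shows "Cauchy ks"
proof (rule metric_CauchyI)
  fix e :: real
  assume "0 < e"
  then obtain M where M: "inverse (real (Suc M)) < e\<^sup>2 / 4"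
    using reals_Archimedean[of "e\<^sup>2 / 4"] by auto
  have "dist (ks m) (ks n) < e" if "M \<le> m" "M \<le> n" for m n
  proof -
    have "inverse (real (Suc m)) \<le> inverse (real (Suc M))"
      "inverse (real (Suc n)) \<le> inverse (real (Suc M))"
      using that by (simp_all add: le_imp_inverse_le)
    then have "(norm (ks m - ks n))\<^sup>2 < e\<^sup>2"
      using power2_norm_diff_le_excess[OF assms(1,2,2) d, of m n] close[of m] close[of n] M
      by linarith
    then show ?thesis
      using \<open>0 < e\<close> by (simp add: dist_norm power2_less_imp_less)
  qed
  then show "\<exists>M. \<forall>m\<ge>M. \<forall>n\<ge>M. dist (ks m) (ks n) < e" by blast
qed

lemma exists_nearest_point:
  fixes z :: "'a::schilbert"
  assumes "closed K" "convex K" "K \<noteq> {}"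
  shows "\<exists>k0\<in>K. \<forall>k\<in>K. norm (z - k0) \<le> norm (z - k)"
proof -
  define d where "d = Inf {(norm (z - k))\<^sup>2 | k. k \<in> K}"
  have d_le: "d \<le> (norm (z - k))\<^sup>2" if "k \<in> K" for k
    unfolding d_def using that by (intro cInf_lower bdd_belowI[of _ 0]) auto
  have "\<exists>k\<in>K. (norm (z - k))\<^sup>2 < d + inverse (real (Suc n))" for n
    using cInf_lessD[of "{(norm (z - k))\<^sup>2 | k. k \<in> K}" "d + inverse (real (Suc n))"] assms(3)
    by (force simp: d_def)
  then obtain ks where ks: "\<And>n. ks n \<in> K" "\<And>n. (norm (z - ks n))\<^sup>2 < d + inverse (real (Suc n))"
    by metis
  then obtain k0 where lim: "ks \<longlonglongrightarrow> k0"
    using minimizing_sequence_Cauchy[OF assms(2) _ d_le] Cauchy_convergent convergent_def by metis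
  have "k0 \<in> K"
    using closed_sequentially[OF assms(1) ks(1) lim] .
  moreover have "(norm (z - k0))\<^sup>2 \<le> d"
  proof (rule LIMSEQ_le)
    show "(\<lambda>n. (norm (z - ks n))\<^sup>2) \<longlonglongrightarrow> (norm (z - k0))\<^sup>2"
      using lim by (intro tendsto_intros)
    show "(\<lambda>n. d + inverse (real (Suc n))) \<longlonglongrightarrow> d"
      using tendsto_add[OF tendsto_const LIMSEQ_inverse_real_of_nat, of d] by simp
    show "\<exists>N. \<forall>n\<ge>N. (norm (z - ks n))\<^sup>2 \<le> d + inverse (real (Suc n))"
      using ks(2) less_imp_le by blast
  qed
  ultimately show ?thesis
    using d_le by (meson norm_ge_zero order_trans power2_le_imp_le)
qed

lemma csubsp_convex:
  assumes "csubsp K"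
  shows "convex K"
  using assms unfolding csubsp_def convex_def by (simp add: scaleR_scaleC)

lemma nearest_point_orthogonal:
  assumes K: "csubsp K" and "k0 \<in> K" "k \<in> K"
    and nearest: "\<And>k. k \<in> K \<Longrightarrow> norm (z - k0) \<le> norm (z - k)"
  shows "cinner (z - k0) k = 0"
proof (cases "k = 0")
  case True
  then show ?thesis by simp
next
  case False
  define a where "a = cinner (z - k0) k / of_real ((norm k)\<^sup>2)"
  have "k0 + a *\<^sub>C k \<in> K"
    using K \<open>k0 \<in> K\<close> \<open>k \<in> K\<close> by (simp add: csubsp_def)
  then have "(norm (z - k0))\<^sup>2 \<le> (norm ((z - k0) - a *\<^sub>C k))\<^sup>2"
    using nearest by (simp add: diff_diff_eq)
  also have "\<dots> = (norm (z - k0))\<^sup>2 - (cmod (cinner (z - k0) k))\<^sup>2 / (norm k)\<^sup>2"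
    unfolding a_def using False by (rule power2_norm_diff_projection)
  finally show ?thesis
    using False by (simp add: divide_le_0_iff)
qed

lemma kernel_closed_csubsp:
  fixes f :: "'a::scnormed_vector \<Rightarrow> complex"
  assumes add: "\<And>x y. f (x + y) = f x + f y" and scale: "\<And>c x. f (c *\<^sub>C x) = c * f x"
    and bound: "\<And>x. cmod (f x) \<le> B * norm x"
  shows "csubsp {x. f x = 0}" "closed {x. f x = 0}"
proof -
  have "f 0 = 0"
    using add[of 0 0] by simp
  then show "csubsp {x. f x = 0}"
    unfolding csubsp_def by (simp add: add scale)
  have "bounded_linear f"
  proof (rule bounded_linear_intro)
    show "f (x + y) = f x + f y" "f (r *\<^sub>R x) = r *\<^sub>R f x" for x y r
      by (simp_all add: add scale scaleR_scaleC scaleR_conv_of_real)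
    show "norm (f x) \<le> norm x * B" for x
      using bound[of x] by (simp add: mult.commute)
  qed
  then show "closed {x. f x = 0}"
    by (intro closed_Collect_eq continuous_intros) (simp add: linear_continuous_on)
qed

lemma Riesz_representation:
  fixes f :: "'a::schilbert \<Rightarrow> complex"
  assumes add: "\<And>x y. f (x + y) = f x + f y" and scale: "\<And>c x. f (c *\<^sub>C x) = c * f x"
    and bound: "\<And>x. cmod (f x) \<le> B * norm x"
  shows "\<exists>u. \<forall>x. f x = cinner x u"
proof (cases "\<forall>x. f x = 0")
  case True
  then show ?thesis by (intro exI[of _ 0]) simp
next
  case False
  then obtain z where "f z \<noteq> 0" by blast
  have f0: "f 0 = 0" and diff: "\<And>x y. f (x - y) = f x - f y"
    using add[of 0 0] add[of "x - y" y for x y] by (simp_all add: eq_diff_eq)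
  define K where "K = {x. f x = 0}"
  have "csubsp K" "closed K" "K \<noteq> {}"
    using kernel_closed_csubsp[OF add scale bound] f0 by (auto simp: K_def)
  then obtain k0 where "k0 \<in> K" and nearest: "\<And>k. k \<in> K \<Longrightarrow> norm (z - k0) \<le> norm (z - k)"
    using exists_nearest_point[OF _ csubsp_convex, of K z] by blast
  define w where "w = z - k0"
  have orth: "cinner k w = 0" if "k \<in> K" for k
    using nearest_point_orthogonal[OF \<open>csubsp K\<close> \<open>k0 \<in> K\<close> that nearest] cinner_commute[of k w]
    by (simp add: w_def)
  have fw: "f w \<noteq> 0"
    using \<open>f z \<noteq> 0\<close> \<open>k0 \<in> K\<close> by (simp add: w_def K_def diff)
  then have "cinner w w \<noteq> 0"
    using f0 by (auto simp: cinner_self_eq)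
  show ?thesis
  proof (intro exI[of _ "cnj (f w / cinner w w) *\<^sub>C w"] allI)
    fix x
    have "f (x - (f x / f w) *\<^sub>C w) = 0"
      using fw by (simp add: diff scale)
    then have "cinner (x - (f x / f w) *\<^sub>C w) w = 0"
      by (intro orth) (simp add: K_def)
    then have "cinner x w = (f x / f w) * cinner w w"
      by (simp add: cinner_diff_left cinner_scaleC_left)
    then show "f x = cinner x (cnj (f w / cinner w w) *\<^sub>C w)"
      using fw \<open>cinner w w \<noteq> 0\<close> by (simp add: cinner_scaleC_right field_simps)
  qed
qed

lemma bounded_op_add: "bounded_op A \<Longrightarrow> A (x + y) = A x + A y"
  by (simp add: bounded_op_def clin_def)

lemma bounded_op_scaleC: "bounded_op A \<Longrightarrow> A (c *\<^sub>C x) = c *\<^sub>C A x"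
  by (simp add: bounded_op_def clin_def)

lemma bounded_op_zero: "bounded_op A \<Longrightarrow> A 0 = 0"
  using bounded_op_scaleC[of A 0 0] by simp

lemma bounded_op_bound_nonneg:
  assumes "bounded_op A"
  obtains K where "K \<ge> 0" "\<And>x. norm (A x) \<le> K * norm x"
proof -
  obtain K where K: "\<And>x. norm (A x) \<le> K * norm x"
    using assms unfolding bounded_op_def by blast
  have "norm (A x) \<le> max K 0 * norm x" for x
    using K[of x] mult_right_mono[of K "max K 0" "norm x"] by simp
  then show thesis by (intro that[of "max K 0"]) auto
qed

lemma bounded_op_has_adjoint:
  fixes A :: "'a::schilbert \<Rightarrow> 'a"
  assumes A: "bounded_op A"
  shows "\<exists>B. \<forall>x y. cinner (A x) y = cinner x (B y)"
proof -
  obtain K where K: "\<And>x. norm (A x) \<le> K * norm x"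
    using bounded_op_bound_nonneg[OF A] by blast
  have "\<exists>u. \<forall>x. cinner (A x) y = cinner x u" for y
  proof (rule Riesz_representation[where B = "K * norm y"])
    show "cinner (A (x + x')) y = cinner (A x) y + cinner (A x') y"
      and "cinner (A (c *\<^sub>C x)) y = c * cinner (A x) y" for x x' c
      using A by (simp_all add: bounded_op_add bounded_op_scaleC cinner_add_left cinner_scaleC_left)
    have "cmod (cinner (A x) y) \<le> norm (A x) * norm y" for x
      by (rule Cauchy_Schwarz_cinner)
    then show "cmod (cinner (A x) y) \<le> K * norm y * norm x" for x
      using mult_right_mono[OF K[of x] norm_ge_zero[of y]] order_trans
      by (metis mult.commute mult.left_commute)
  qed
  then show ?thesis by metis
qed

lemma cinner_cadjoint:
  fixes A :: "'a::schilbert \<Rightarrow> 'a"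
  assumes "bounded_op A"
  shows "cinner (A x) y = cinner x (cadjoint A y)"
proof -
  obtain B where B: "\<forall>x y. cinner (A x) y = cinner x (B y)"
    using bounded_op_has_adjoint[OF assms] by blast
  have unique: "\<exists>!B. \<forall>x y. cinner (A x) y = cinner x (B y)"
  proof (rule ex1I)
    show "\<forall>x y. cinner (A x) y = cinner x (B y)" by (rule B)
    show "B' = B" if "\<forall>x y. cinner (A x) y = cinner x (B' y)" for B'
      using that B by (metis cinner_ext ext)
  qed
  have "cadjoint A = B"
    unfolding cadjoint_def by (rule the1_equality[OF unique]) (rule B)
  then show ?thesis using B by simp
qed

lemma grading_bounded_op: "grading \<epsilon> \<Longrightarrow> bounded_op \<epsilon>"
  and grading_involutive: "grading \<epsilon> \<Longrightarrow> \<epsilon> (\<epsilon> x) = x"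
  and grading_selfadjoint: "grading \<epsilon> \<Longrightarrow> cinner (\<epsilon> x) y = cinner x (\<epsilon> y)"
  by (simp_all add: grading_def)

lemma norm_grading:
  assumes "grading \<epsilon>"
  shows "norm (\<epsilon> x) = norm x"
proof -
  have "(norm (\<epsilon> x))\<^sup>2 = (norm x)\<^sup>2"
    using assms by (simp add: power2_norm_eq_cinner grading_selfadjoint grading_involutive)
  then show ?thesis by (simp add: power2_eq_iff_nonneg)
qed

definition graded_form :: "('h::schilbert \<Rightarrow> 'h) \<Rightarrow> ('h \<Rightarrow> 'h) \<Rightarrow> 'h \<Rightarrow> complex" where
  "graded_form \<epsilon> A \<xi> = cinner (A \<xi>) (\<epsilon> \<xi>)"

lemma strong_norm_graded_form:
  "strong_norm \<epsilon> A = Sup {cmod (graded_form \<epsilon> A \<xi>) | \<xi>. norm \<xi> \<le> 1}"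
  by (simp add: strong_norm_def graded_form_def)

lemma graded_form_scaleC:
  assumes "bounded_op A" "grading \<epsilon>"
  shows "graded_form \<epsilon> A (c *\<^sub>C \<xi>) = of_real ((cmod c)\<^sup>2) * graded_form \<epsilon> A \<xi>"
  unfolding complex_norm_square using assms
  by (simp add: graded_form_def bounded_op_scaleC grading_bounded_op cinner_scaleC_left
      cinner_scaleC_right mult_ac)

lemma op_norm_upper:
  assumes "bounded_op A" "norm x \<le> 1"
  shows "norm (A x) \<le> op_norm A"
proof -
  obtain K where K: "K \<ge> 0" "\<And>x. norm (A x) \<le> K * norm x"
    using bounded_op_bound_nonneg[OF assms(1)] by blast
  have "norm (A y) \<le> K" if "norm y \<le> 1" for y
    using K(2)[of y] mult_left_mono[OF that K(1)] by simp
  then have "bdd_above {norm (A x) | x. norm x \<le> 1}"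
    by (intro bdd_aboveI[of _ K]) auto
  then show ?thesis
    unfolding op_norm_def using assms(2) by (intro cSup_upper) auto
qed

lemma op_norm_le:
  assumes "\<And>x. norm x \<le> 1 \<Longrightarrow> norm (A x) \<le> c"
  shows "op_norm A \<le> c"
  unfolding op_norm_def using assms by (intro cSup_least) (auto intro: exI[of _ 0])

lemma graded_form_le_op_norm:
  assumes "bounded_op A" "grading \<epsilon>" "norm \<xi> \<le> 1"
  shows "cmod (graded_form \<epsilon> A \<xi>) \<le> op_norm A"
proof -
  have "cmod (graded_form \<epsilon> A \<xi>) \<le> norm (A \<xi>) * norm \<xi>"
    unfolding graded_form_def using Cauchy_Schwarz_cinner norm_grading[OF assms(2)] by metis
  also have "\<dots> \<le> norm (A \<xi>)"
    using assms(3) mult_left_mono[of "norm \<xi>" 1 "norm (A \<xi>)"] by simp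
  also have "\<dots> \<le> op_norm A"
    using assms(1,3) by (rule op_norm_upper)
  finally show ?thesis .
qed

lemma strong_norm_upper:
  assumes "bounded_op A" "grading \<epsilon>" "norm \<xi> \<le> 1"
  shows "cmod (graded_form \<epsilon> A \<xi>) \<le> strong_norm \<epsilon> A"
  unfolding strong_norm_graded_form using assms graded_form_le_op_norm[OF assms(1,2)]
  by (intro cSup_upper bdd_aboveI[of _ "op_norm A"]) auto

lemma strong_norm_nonneg:
  assumes "bounded_op A" "grading \<epsilon>"
  shows "0 \<le> strong_norm \<epsilon> A"
  using strong_norm_upper[OF assms, of 0] assms by (simp add: graded_form_def bounded_op_zero)

lemma strong_norm_le_op_norm:
  assumes "bounded_op A" "grading \<epsilon>"
  shows "strong_norm \<epsilon> A \<le> op_norm A"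
  unfolding strong_norm_graded_form using graded_form_le_op_norm[OF assms]
  by (intro cSup_least) (auto intro: exI[of _ 0])

lemma cmod_graded_form_sgn:
  assumes "bounded_op A" "grading \<epsilon>"
  shows "cmod (graded_form \<epsilon> A \<xi>) = (norm \<xi>)\<^sup>2 * cmod (graded_form \<epsilon> A (sgn \<xi>))"
proof -
  have "\<xi> = complex_of_real (norm \<xi>) *\<^sub>C sgn \<xi>"
    by (cases "\<xi> = 0") (simp_all add: sgn_div_norm flip: scaleR_scaleC)
  then show ?thesis
    using graded_form_scaleC[OF assms, of "complex_of_real (norm \<xi>)" "sgn \<xi>"]
    by (simp add: norm_mult norm_power)
qed

lemma graded_form_le_strong_norm:
  assumes "bounded_op A" "grading \<epsilon>"
  shows "cmod (graded_form \<epsilon> A \<xi>) \<le> strong_norm \<epsilon> A * (norm \<xi>)\<^sup>2"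
proof -
  have "cmod (graded_form \<epsilon> A (sgn \<xi>)) \<le> strong_norm \<epsilon> A"
    by (rule strong_norm_upper[OF assms]) (simp add: norm_sgn)
  then show ?thesis
    using cmod_graded_form_sgn[OF assms, of \<xi>] mult_right_mono[OF _ zero_le_power2[of "norm \<xi>"]]
    by (metis mult.commute)
qed

lemma strong_norm_le_unit:
  assumes "bounded_op A" "grading \<epsilon>" "0 \<le> c"
    and unit: "\<And>\<eta>. norm \<eta> = 1 \<Longrightarrow> cmod (graded_form \<epsilon> A \<eta>) \<le> c"
  shows "strong_norm \<epsilon> A \<le> c"
proof -
  have "cmod (graded_form \<epsilon> A \<xi>) \<le> c" if "norm \<xi> \<le> 1" for \<xi>
  proof (cases "\<xi> = 0")
    case True
    then show ?thesis
      using assms(1,3) by (simp add: graded_form_def bounded_op_zero)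
  next
    case False
    have "(norm \<xi>)\<^sup>2 * cmod (graded_form \<epsilon> A (sgn \<xi>)) \<le> 1 * c"
      using unit[of "sgn \<xi>"] False that assms(3)
      by (intro mult_mono) (simp_all add: norm_sgn power_le_one)
    then show ?thesis
      using cmod_graded_form_sgn[OF assms(1,2), of \<xi>] by simp
  qed
  then show ?thesis
    unfolding strong_norm_graded_form by (intro cSup_least) (auto intro: exI[of _ 0])
qed

lemma graded_form_rep_add:
  assumes "iso_star_rep st \<epsilon> \<rho>"
  shows "graded_form \<epsilon> (\<rho> (u + v)) \<xi> = graded_form \<epsilon> (\<rho> u) \<xi> + graded_form \<epsilon> (\<rho> v) \<xi>"
  using assms by (simp add: iso_star_rep_def graded_form_def cinner_add_left)

lemma graded_form_rep_scaleC:
  assumes "iso_star_rep st \<epsilon> \<rho>"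
  shows "graded_form \<epsilon> (\<rho> (c *\<^sub>C v)) \<xi> = c * graded_form \<epsilon> (\<rho> v) \<xi>"
  using assms by (simp add: iso_star_rep_def graded_form_def cinner_scaleC_left)

lemma graded_form_rep_star:
  assumes g: "grading \<epsilon>" and r: "iso_star_rep st \<epsilon> \<rho>"
  shows "graded_form \<epsilon> (\<rho> (st v)) \<xi> = cnj (graded_form \<epsilon> (\<rho> v) \<xi>)"
proof -
  have "\<rho> (st v) \<xi> = \<epsilon> (cadjoint (\<rho> v) (\<epsilon> \<xi>))"
    using r by (simp add: iso_star_rep_def superadj_def)
  then have "graded_form \<epsilon> (\<rho> (st v)) \<xi> = cinner (cadjoint (\<rho> v) (\<epsilon> \<xi>)) \<xi>"
    using g by (simp add: graded_form_def grading_selfadjoint grading_involutive)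
  also have "\<dots> = cnj (cinner (\<rho> v \<xi>) (\<epsilon> \<xi>))"
    using r by (simp add: iso_star_rep_def cinner_cadjoint cinner_commute[of _ \<xi>])
  finally show ?thesis
    by (simp add: graded_form_def)
qed

lemma Re_graded_form_rep_add_star:
  assumes "grading \<epsilon>" "iso_star_rep st \<epsilon> \<rho>"
  shows "Re (graded_form \<epsilon> (\<rho> (t + st s)) \<xi>) = Re (graded_form \<epsilon> (\<rho> (t + s)) \<xi>)"
  using assms by (simp add: graded_form_rep_add graded_form_rep_star)

lemma selfadjoint_norm_le_numerical_radius:
  fixes S :: "'a::scinner \<Rightarrow> 'a"
  assumes "clin S" and selfadjoint: "\<And>x y. cinner (S x) y = cinner x (S y)"
    and radius: "\<And>\<xi>. cmod (cinner (S \<xi>) \<xi>) \<le> w * (norm \<xi>)\<^sup>2"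
    and "0 \<le> w" "norm x \<le> 1"
  shows "norm (S x) \<le> w"
proof (cases "S x = 0")
  case True
  then show ?thesis using \<open>0 \<le> w\<close> by simp
next
  case False
  define m where "m = norm (S x)"
  have "m > 0" using False by (simp add: m_def)
  define y where "y = (1 / m) *\<^sub>R S x"
  have "norm y = 1"
    using \<open>m > 0\<close> by (simp add: y_def m_def)
  have Sxy: "cinner (S x) y = of_real m"
    using \<open>m > 0\<close> by (simp add: y_def cinner_scaleR_right cinner_self_eq m_def power2_eq_square)
  have S_add: "S (a + b) = S a + S b" and S_diff: "S (a - b) = S a - S b" for a b
    using \<open>clin S\<close> unfolding clin_def by (metis add_diff_cancel_right' diff_add_cancel)+
  have "cinner (S (x + y)) (x + y) - cinner (S (x - y)) (x - y)
      = 2 * (cinner (S x) y + cnj (cinner (S x) y))"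
    using selfadjoint[of y x] cinner_commute[of y "S x"]
    by (simp add: S_add S_diff cinner_add_left cinner_add_right cinner_diff_left cinner_diff_right
        algebra_simps)
  then have "4 * m = Re (cinner (S (x + y)) (x + y)) - Re (cinner (S (x - y)) (x - y))"
    by (simp add: Sxy complex_eq_iff)
  also have "\<dots> \<le> w * (norm (x + y))\<^sup>2 + w * (norm (x - y))\<^sup>2"
    using radius[of "x + y"] radius[of "x - y"]
      abs_Re_le_cmod[of "cinner (S (x + y)) (x + y)"] abs_Re_le_cmod[of "cinner (S (x - y)) (x - y)"]
    by linarith
  also have "\<dots> = w * (2 * (norm x)\<^sup>2 + 2)"
    using parallelogram_law[of x y] \<open>norm y = 1\<close> by (simp add: distrib_left[symmetric])
  also have "\<dots> \<le> w * 4"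
    using \<open>0 \<le> w\<close> \<open>norm x \<le> 1\<close> by (intro mult_left_mono) (simp_all add: power_le_one)
  finally show ?thesis
    by (simp add: m_def)
qed

lemma op_norm_le_strong_norm_hermitian:
  assumes g: "grading \<epsilon>" and r: "iso_star_rep st \<epsilon> \<rho>" and "st h = h"
  shows "op_norm (\<rho> h) \<le> strong_norm \<epsilon> (\<rho> h)"
proof (rule op_norm_le)
  define A where "A = \<rho> h"
  have A: "bounded_op A"
    using r by (simp add: iso_star_rep_def A_def)
  have "A y = \<epsilon> (cadjoint A (\<epsilon> y))" for y
    using r \<open>st h = h\<close> unfolding A_def iso_star_rep_def superadj_def by (metis comp_apply)
  then have adjoint: "cadjoint A (\<epsilon> y) = \<epsilon> (A y)" for y
    using g by (simp add: grading_involutive)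
  have selfadjoint: "cinner (\<epsilon> (A x)) y = cinner x (\<epsilon> (A y))" for x y
    using g A by (simp add: grading_selfadjoint cinner_cadjoint adjoint)
  have clin: "clin (\<lambda>\<xi>. \<epsilon> (A \<xi>))"
    using A grading_bounded_op[OF g] by (simp add: clin_def bounded_op_add bounded_op_scaleC)
  have radius: "cmod (cinner (\<epsilon> (A \<xi>)) \<xi>) \<le> strong_norm \<epsilon> A * (norm \<xi>)\<^sup>2" for \<xi>
    using graded_form_le_strong_norm[OF A g, of \<xi>] g by (simp add: graded_form_def grading_selfadjoint)
  have "norm (\<epsilon> (A x)) \<le> strong_norm \<epsilon> A" if "norm x \<le> 1" for x
    using selfadjoint_norm_le_numerical_radius[OF clin selfadjoint radius strong_norm_nonneg[OF A g] that] .
  then show "norm (\<rho> h x) \<le> strong_norm \<epsilon> (\<rho> h)" if "norm x \<le> 1" for x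
    using that by (simp add: A_def norm_grading[OF g])
qed

lemma cis_minus_Arg_mult: "cis (- Arg c) * c = complex_of_real (cmod c)"
proof -
  have "cis (- Arg c) * c = cis (- Arg c) * (of_real (cmod c) * cis (Arg c))"
    by (metis rcis_cmod_Arg rcis_def)
  also have "\<dots> = of_real (cmod c)"
    by (simp add: mult.left_commute cis_mult)
  finally show ?thesis .
qed

lemma really_strongly_contractive_unit_bound:
  assumes \<phi>: "star_linear stV stW \<phi>" and T: "csubsp T"
    and decomp: "{t + stV s | t s. t \<in> T \<and> s \<in> T} = UNIV"
    and gV: "grading \<epsilon>V" and rV: "iso_star_rep stV \<epsilon>V \<rho>V"
    and gW: "grading \<epsilon>W" and rW: "iso_star_rep stW \<epsilon>W \<rho>W"
    and rsc: "really_strongly_contractive_on T \<phi> \<epsilon>V \<rho>V \<epsilon>W \<rho>W" and "norm \<eta> = 1"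
  shows "cmod (graded_form \<epsilon>W (\<rho>W (\<phi> x)) \<eta>) \<le> strong_norm \<epsilon>V (\<rho>V x)"
proof -
  define \<omega> where "\<omega> = cis (- Arg (graded_form \<epsilon>W (\<rho>W (\<phi> x)) \<eta>))"
  obtain t s where "t \<in> T" "s \<in> T" and ts: "\<omega> *\<^sub>C x = t + stV s"
    using decomp by blast
  then have "t + s \<in> T"
    using T by (simp add: csubsp_def)
  then obtain \<xi> where "norm \<xi> = 1" and real_parts:
      "\<bar>Re (graded_form \<epsilon>W (\<rho>W (\<phi> (t + s))) \<eta>)\<bar> \<le> \<bar>Re (graded_form \<epsilon>V (\<rho>V (t + s)) \<xi>)\<bar>"
    using rsc \<open>norm \<eta> = 1\<close>
    unfolding really_strongly_contractive_on_def graded_form_def Let_def by blast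
  have \<phi>_ts: "\<phi> (\<omega> *\<^sub>C x) = \<phi> t + stW (\<phi> s)" and \<phi>_sum: "\<phi> (t + s) = \<phi> t + \<phi> s"
    using \<phi> ts by (simp_all add: star_linear_def clin_def)
  have "cmod (graded_form \<epsilon>W (\<rho>W (\<phi> x)) \<eta>) = Re (graded_form \<epsilon>W (\<rho>W (\<phi> (\<omega> *\<^sub>C x))) \<eta>)"
    using \<phi> rW by (simp add: star_linear_def clin_def graded_form_rep_scaleC \<omega>_def cis_minus_Arg_mult)
  also have "\<dots> = Re (graded_form \<epsilon>W (\<rho>W (\<phi> (t + s))) \<eta>)"
    unfolding \<phi>_ts \<phi>_sum by (rule Re_graded_form_rep_add_star[OF gW rW])
  also have "\<dots> \<le> \<bar>Re (graded_form \<epsilon>V (\<rho>V (t + s)) \<xi>)\<bar>"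
    using real_parts by linarith
  also have "\<dots> = \<bar>Re (graded_form \<epsilon>V (\<rho>V (\<omega> *\<^sub>C x)) \<xi>)\<bar>"
    unfolding ts Re_graded_form_rep_add_star[OF gV rV] ..
  also have "\<dots> \<le> cmod (graded_form \<epsilon>V (\<rho>V (\<omega> *\<^sub>C x)) \<xi>)"
    by (rule abs_Re_le_cmod)
  also have "\<dots> = cmod (graded_form \<epsilon>V (\<rho>V x) \<xi>)"
    by (simp add: graded_form_rep_scaleC[OF rV] norm_mult \<omega>_def)
  also have "\<dots> \<le> strong_norm \<epsilon>V (\<rho>V x)"
    using rV gV \<open>norm \<xi> = 1\<close> by (intro strong_norm_upper) (simp_all add: iso_star_rep_def)
  finally show ?thesis .
qed

lemma really_strongly_contractive_imp_strongly_contractive: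
  assumes "star_linear stV stW \<phi>" "csubsp T"
    and "{t + stV s | t s. t \<in> T \<and> s \<in> T} = UNIV"
    and "grading \<epsilon>V" "iso_star_rep stV \<epsilon>V \<rho>V"
    and "grading \<epsilon>W" "iso_star_rep stW \<epsilon>W \<rho>W"
    and "really_strongly_contractive_on T \<phi> \<epsilon>V \<rho>V \<epsilon>W \<rho>W"
  shows "strongly_contractive \<phi> \<epsilon>V \<rho>V \<epsilon>W \<rho>W"
  unfolding strongly_contractive_def
proof
  fix x
  show "strong_norm \<epsilon>W (\<rho>W (\<phi> x)) \<le> strong_norm \<epsilon>V (\<rho>V x)"
  proof (rule strong_norm_le_unit)
    show "bounded_op (\<rho>W (\<phi> x))" "0 \<le> strong_norm \<epsilon>V (\<rho>V x)"
      using assms(4,5,7) by (simp_all add: iso_star_rep_def strong_norm_nonneg)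
    show "cmod (graded_form \<epsilon>W (\<rho>W (\<phi> x)) \<eta>) \<le> strong_norm \<epsilon>V (\<rho>V x)" if "norm \<eta> = 1" for \<eta>
      using really_strongly_contractive_unit_bound[OF assms that] .
  qed (rule assms(6))
qed

lemma strongly_contractive_imp_hermitian_contractive:
  assumes "star_linear stV stW \<phi>"
    and "grading \<epsilon>V" "iso_star_rep stV \<epsilon>V \<rho>V"
    and "grading \<epsilon>W" "iso_star_rep stW \<epsilon>W \<rho>W"
    and "strongly_contractive \<phi> \<epsilon>V \<rho>V \<epsilon>W \<rho>W"
  shows "hermitian_contractive stV \<phi>"
  unfolding hermitian_contractive_def
proof (intro allI impI)
  fix x
  assume "stV x = x"
  then have "stW (\<phi> x) = \<phi> x"
    using assms(1) by (metis star_linear_def)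
  have "norm (\<phi> x) = op_norm (\<rho>W (\<phi> x))"
    using assms(5) by (simp add: iso_star_rep_def)
  also have "\<dots> \<le> strong_norm \<epsilon>W (\<rho>W (\<phi> x))"
    using assms(4,5) \<open>stW (\<phi> x) = \<phi> x\<close> by (rule op_norm_le_strong_norm_hermitian)
  also have "\<dots> \<le> strong_norm \<epsilon>V (\<rho>V x)"
    using assms(6) by (simp add: strongly_contractive_def)
  also have "\<dots> \<le> op_norm (\<rho>V x)"
    using assms(2,3) by (intro strong_norm_le_op_norm) (simp_all add: iso_star_rep_def)
  also have "\<dots> = norm x"
    using assms(3) by (simp add: iso_star_rep_def)
  finally show "norm (\<phi> x) \<le> norm x" .
qed

theorem mainTheorem5:
  fixes mnV :: "nat \<Rightarrow> (nat \<Rightarrow> nat \<Rightarrow> 'v::scnormed_vector) \<Rightarrow> real"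
    and mnW :: "nat \<Rightarrow> (nat \<Rightarrow> nat \<Rightarrow> 'w::scnormed_vector) \<Rightarrow> real"
    and stV :: "'v \<Rightarrow> 'v" and stW :: "'w \<Rightarrow> 'w"
    and \<phi> :: "'v \<Rightarrow> 'w" and T :: "'v set"
    and \<epsilon>V :: "'h1::schilbert \<Rightarrow> 'h1" and \<rho>V :: "'v \<Rightarrow> 'h1 \<Rightarrow> 'h1"
    and \<epsilon>W :: "'h2::schilbert \<Rightarrow> 'h2" and \<rho>W :: "'w \<Rightarrow> 'h2 \<Rightarrow> 'h2"
  assumes "super_operator_space mnV stV"
    and "super_operator_space mnW stW"
    and "star_linear stV stW \<phi>"
    and "csubsp T" and "closed T"
    and "{t + stV s | t s. t \<in> T \<and> s \<in> T} = UNIV"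
    and "grading \<epsilon>V" and "iso_star_rep stV \<epsilon>V \<rho>V"
    and "grading \<epsilon>W" and "iso_star_rep stW \<epsilon>W \<rho>W"
    and "really_strongly_contractive_on T \<phi> \<epsilon>V \<rho>V \<epsilon>W \<rho>W"
  shows "strongly_contractive \<phi> \<epsilon>V \<rho>V \<epsilon>W \<rho>W \<and> hermitian_contractive stV \<phi>"
proof -
  have "strongly_contractive \<phi> \<epsilon>V \<rho>V \<epsilon>W \<rho>W"
    using assms(3,4,6-11) by (rule really_strongly_contractive_imp_strongly_contractive)
  moreover have "hermitian_contractive stV \<phi>"
    using assms(3,7-10) calculation by (rule strongly_contractive_imp_hermitian_contractive)
  ultimately show ?thesis ..
qed

end
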